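(* Let $(\Omega,\Sigma,\mu)$ be a measure space with $\mu(\Omega)=1$, let $p\ge 1$, let $\chi\in\mathcal W^+_p$, and let $\{\chi_k\}_{k\in\mathbb N}$ be a sequence of normalized Young weights converging to $\chi$ uniformly on compact subsets of $\mathbb R$. Let $f$ be a bounded $\mu$-measurable function. Then $f\in L^\chi(\mu)$ and $f\in L^{\chi_k}(\mu)$ for all $k$, and $$\lim_{k\to\infty}\|f\|_{\chi_k,\mu}=\|f\|_{\chi,\mu}.$$
   Context: A normalized Young weight is a function $\chi:\mathbb R\to[0,\infty]$ that is convex, even, lower semicontinuous, with $\chi(0)=0$ and $1\in\partial\chi(1)$ (here $\partial\chi(l)$ is the set of subgradients of $\chi$ at $l$). For $p\ge1$, $\mathcal W^+_p$ denotes the set of finite-valued normalized Young weights satisfying $l\,\chi'(l)\le p\,\chi(l)$ for all $l>0$ and every subgradient $\chi'(l)\in\partial\chi(l)$. For a normalized Young weight $\chi$, $L^\chi(\mu)$ is the set of measurable $f:\Omega\to[-\infty,\infty]$ such that $\int_\Omega\chi(rf)\,d\mu<\infty$ for some $r>0$, with the norm $\|f\|_{\chi,\mu}=\inf\{r>0:\int_\Omega\chi(f/r)\,d\mu\le\chi(1)\}$. *)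

theory Defs
  imports "HOL-Analysis.Analysis" "HOL-Probability.Probability"
begin

definition subgradients :: "(real \<Rightarrow> ereal) \<Rightarrow> real \<Rightarrow> real set" where
  "subgradients Y l = {c. Y l \<noteq> \<infinity> \<and> Y l \<noteq> -\<infinity> \<and>
      (\<forall>y. Y l + ereal (c * (y - l)) \<le> Y y)}"

definition convex_ereal_fun :: "(real \<Rightarrow> ereal) \<Rightarrow> bool" where
  "convex_ereal_fun Y \<longleftrightarrow>
     (\<forall>x y t. 0 \<le> t \<and> t \<le> 1 \<longrightarrow>
        Y (t * x + (1 - t) * y) \<le> ereal t * Y x + ereal (1 - t) * Y y)"

definition lsc_fun :: "(real \<Rightarrow> ereal) \<Rightarrow> bool" where
  "lsc_fun Y \<longleftrightarrow> (\<forall>c. closed {x. Y x \<le> c})"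

definition normalized_young_weight :: "(real \<Rightarrow> ereal) \<Rightarrow> bool" where
  "normalized_young_weight Y \<longleftrightarrow>
     (\<forall>x. 0 \<le> Y x) \<and> convex_ereal_fun Y \<and> (\<forall>x. Y (-x) = Y x) \<and>
     lsc_fun Y \<and> Y 0 = 0 \<and> 1 \<in> subgradients Y 1"

definition W_plus :: "real \<Rightarrow> (real \<Rightarrow> ereal) set" where
  "W_plus p = {Y. normalized_young_weight Y \<and> (\<forall>x. Y x \<noteq> \<infinity>) \<and>
      (\<forall>l>0. \<forall>c\<in>subgradients Y l. ereal (l * c) \<le> ereal p * Y l)}"

definition in_orlicz :: "(real \<Rightarrow> ereal) \<Rightarrow> 'a measure \<Rightarrow> ('a \<Rightarrow> real) \<Rightarrow> bool" where
  "in_orlicz Y M f \<longleftrightarrow> f \<in> borel_measurable M \<and>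
     (\<exists>r>0. (\<integral>\<^sup>+ x. e2ennreal (Y (r * f x)) \<partial>M) < \<infinity>)"

definition orlicz_norm :: "(real \<Rightarrow> ereal) \<Rightarrow> 'a measure \<Rightarrow> ('a \<Rightarrow> real) \<Rightarrow> real" where
  "orlicz_norm Y M f = Inf {r. r > 0 \<and>
     (\<integral>\<^sup>+ x. e2ennreal (Y (f x / r)) \<partial>M) \<le> e2ennreal (Y 1)}"

definition unif_conv_compact :: "(nat \<Rightarrow> real \<Rightarrow> ereal) \<Rightarrow> (real \<Rightarrow> ereal) \<Rightarrow> bool" where
  "unif_conv_compact Ys Y \<longleftrightarrow>
     (\<forall>K. compact K \<longrightarrow> (\<forall>e>0. \<forall>\<^sub>F k in sequentially. \<forall>x\<in>K.
        \<bar>Ys k x - Y x\<bar> < ereal e))"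

end

theory Submission
  imports Defs
begin

text \<open>For bounded \<open>f\<close> the modular \<open>r \<mapsto> \<integral> \<chi>(f/r)\<close> is finite and
decreasing in \<open>r\<close>, and the norm is the infimum of its sublevel set
\<open>{r > 0. modular \<le> \<chi>(1)}\<close>. Since \<open>f/r\<close> ranges in a compact interval, uniform convergence
on compacts makes the modulars of \<open>\<chi>\<^sub>k\<close> and the levels \<open>\<chi>\<^sub>k(1)\<close> converge pointwise.
The growth bound \<open>l \<chi>'(l) \<le> p \<chi>(l)\<close> forces \<open>\<chi>\<close> to be positive, hence strictly
increasing, on \<open>(0,\<infinity>)\<close>; so once the modular of \<open>\<chi>\<close> has reached its level it stays
strictly below it, and an infimum of sublevel sets with this property is continuous under
pointwise convergence.\<close>

lemma convex_on_supporting_line: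
  fixes g :: "real \<Rightarrow> real"
  assumes g: "convex_on UNIV g"
  shows "\<exists>c. \<forall>w. g l + c * (w - l) \<le> g w"
proof -
  define S where "S = {(g l - g w) / (l - w) | w. w < l}"
  have slopes: "(g l - g w) / (l - w) \<le> (g z - g l) / (z - l)" if "w < l" "l < z" for w z
  proof -
    have "(g w - g l) / (w - l) \<le> (g w - g z) / (w - z)"
      "(g w - g z) / (w - z) \<le> (g l - g z) / (l - z)"
      using convex_on_slope_le[OF g, of w z l] that by auto
    moreover have "(g l - g w) / (l - w) = (g w - g l) / (w - l)"
      "(g z - g l) / (z - l) = (g l - g z) / (l - z)"
      by (simp_all add: divide_simps) (simp_all add: algebra_simps)
    ultimately show ?thesis by linarith
  qed
  have "S \<noteq> {}" unfolding S_def by (auto intro!: exI[of _ "l - 1"])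
  have "bdd_above S"
    unfolding S_def bdd_above_def using slopes[of _ "l + 1"] by auto
  have left: "(g l - g w) / (l - w) \<le> Sup S" if "w < l" for w
    by (rule cSup_upper[OF _ \<open>bdd_above S\<close>]) (use that S_def in auto)
  have right: "Sup S \<le> (g z - g l) / (z - l)" if "l < z" for z
    by (rule cSup_least[OF \<open>S \<noteq> {}\<close>]) (use that S_def slopes in auto)
  have "g l + Sup S * (w - l) \<le> g w" for w
  proof (cases w l rule: linorder_cases)
    case less
    then have "g l - g w \<le> Sup S * (l - w)"
      using left[OF less] by (simp add: divide_le_eq)
    then show ?thesis by (simp add: algebra_simps)
  next
    case greater
    then have "Sup S * (w - l) \<le> g w - g l"
      using right[OF greater] by (simp add: le_divide_eq)
    then show ?thesis by simp
  qed simp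
  then show ?thesis by blast
qed

lemma young_weight_nonneg: "normalized_young_weight Z \<Longrightarrow> 0 \<le> Z x"
  unfolding normalized_young_weight_def by blast

lemma young_weight_abs: "normalized_young_weight Z \<Longrightarrow> Z \<bar>x\<bar> = Z x"
  unfolding normalized_young_weight_def by (cases "x \<ge> 0") auto

lemma young_weight_scale_le:
  assumes "normalized_young_weight Z" "0 \<le> t" "t \<le> 1"
  shows "Z (t * x) \<le> ereal t * Z x"
proof -
  have "Z (t * x + (1 - t) * 0) \<le> ereal t * Z x + ereal (1 - t) * Z 0"
    using assms unfolding normalized_young_weight_def convex_ereal_fun_def by blast
  then show ?thesis
    using assms unfolding normalized_young_weight_def by simp
qed

lemma young_weight_mono_abs:
  assumes Z: "normalized_young_weight Z" and le: "\<bar>a\<bar> \<le> \<bar>b\<bar>"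
  shows "Z a \<le> Z b"
proof (cases "b = 0")
  case True
  then show ?thesis using le by simp
next
  case False
  define t where "t = \<bar>a\<bar> / \<bar>b\<bar>"
  have t: "0 \<le> t" "t \<le> 1" "\<bar>a\<bar> = t * \<bar>b\<bar>"
    using False le by (auto simp: t_def)
  have "Z a = Z (t * \<bar>b\<bar>)"
    using young_weight_abs[OF Z, of a] t(3) by simp
  also have "\<dots> \<le> ereal t * Z \<bar>b\<bar>"
    using young_weight_scale_le[OF Z t(1,2)] .
  also have "\<dots> \<le> Z \<bar>b\<bar>"
    using young_weight_nonneg[OF Z, of "\<bar>b\<bar>"] t by (cases "Z \<bar>b\<bar>") (auto simp: mult_left_le_one_le)
  finally show ?thesis
    using young_weight_abs[OF Z] by simp
qed

lemma young_weight_one_finite: "normalized_young_weight Z \<Longrightarrow> Z 1 \<noteq> \<infinity>"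
  unfolding normalized_young_weight_def subgradients_def by auto

lemma young_weight_borel_measurable:
  assumes "normalized_young_weight Z"
  shows "Z \<in> borel_measurable borel"
proof (rule borel_measurableI_le)
  fix c
  have "closed {x. Z x \<le> c}"
    using assms unfolding normalized_young_weight_def lsc_fun_def by blast
  then show "{x \<in> space borel. Z x \<le> c} \<in> sets borel" by simp
qed

lemma W_plus_young_weight: "Y \<in> W_plus p \<Longrightarrow> normalized_young_weight Y"
  unfolding W_plus_def by blast

lemma W_plus_real: "Y \<in> W_plus p \<Longrightarrow> Y x = ereal (real_of_ereal (Y x))"
  using young_weight_nonneg[OF W_plus_young_weight, of Y p x]
  unfolding W_plus_def by (cases "Y x") auto

lemma W_plus_e2ennreal: "Y \<in> W_plus p \<Longrightarrow> e2ennreal (Y x) = ennreal (real_of_ereal (Y x))"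
  by (metis W_plus_real e2ennreal_ereal)

lemma W_plus_convex_on:
  assumes Y: "Y \<in> W_plus p"
  shows "convex_on UNIV (\<lambda>x. real_of_ereal (Y x))"
proof (rule convex_onI)
  fix t x z :: real
  assume t: "0 < t" "t < 1"
  define y where "y u = real_of_ereal (Y u)" for u
  have Y_eq: "Y u = ereal (y u)" for u
    unfolding y_def by (rule W_plus_real[OF Y])
  have "convex_ereal_fun Y"
    using W_plus_young_weight[OF Y] unfolding normalized_young_weight_def by blast
  then have "Y ((1 - t) * x + (1 - (1 - t)) * z) \<le> ereal (1 - t) * Y x + ereal (1 - (1 - t)) * Y z"
    by (rule convex_ereal_fun_def[THEN iffD1, rule_format]) (use t in auto)
  then show "y ((1 - t) *\<^sub>R x + t *\<^sub>R z) \<le> (1 - t) * y x + t * y z"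
    by (simp add: Y_eq)
qed auto

lemma W_plus_one_pos:
  assumes Y: "Y \<in> W_plus p"
  shows "0 < real_of_ereal (Y 1)"
proof -
  have "1 \<in> subgradients Y 1"
    using W_plus_young_weight[OF Y] unfolding normalized_young_weight_def by blast
  then have "ereal (1 * 1) \<le> ereal p * Y 1"
    using Y zero_less_one unfolding W_plus_def by blast
  also have "\<dots> = ereal (p * real_of_ereal (Y 1))"
    by (subst W_plus_real[OF Y]) simp
  finally have "1 \<le> p * real_of_ereal (Y 1)"
    by simp
  moreover have "0 \<le> real_of_ereal (Y 1)"
    using real_of_ereal_pos young_weight_nonneg W_plus_young_weight[OF Y] by blast
  ultimately show ?thesis
    by (cases "real_of_ereal (Y 1) = 0") auto
qed

lemma W_plus_zero_spreads:
  assumes Y: "Y \<in> W_plus p" and p: "1 \<le> p" and a: "0 < a"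
    and zero: "real_of_ereal (Y a) = 0"
  shows "real_of_ereal (Y (a * (1 + 1 / (2 * p)))) = 0"
proof -
  define y where "y u = real_of_ereal (Y u)" for u
  have Y_eq: "Y u = ereal (y u)" for u
    unfolding y_def by (rule W_plus_real[OF Y])
  define l where "l = a * (1 + 1 / (2 * p))"
  have al: "a < l" and ratio: "l / (l - a) = 2 * p + 1"
    using a p by (simp_all add: l_def field_simps)
  txt \<open>A supporting slope \<open>c\<close> at \<open>l\<close> is at least the secant slope \<open>y l / (l - a)\<close>,
    while \<open>l c \<le> p y l\<close>; as \<open>l / (l - a) = 2p + 1 > p\<close>, this forces \<open>y l = 0\<close>.\<close>
  obtain c where c: "\<And>w. y l + c * (w - l) \<le> y w"
    using convex_on_supporting_line[OF W_plus_convex_on[OF Y]] unfolding y_def by blast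
  have "c \<in> subgradients Y l"
    unfolding subgradients_def Y_eq using c by simp
  then have "ereal (l * c) \<le> ereal p * Y l"
    using Y al a unfolding W_plus_def by auto
  then have lc: "l * c \<le> p * y l"
    by (simp add: Y_eq)
  have "y l \<le> c * (l - a)"
    using c[of a] zero unfolding y_def by (simp add: algebra_simps)
  then have "y l / (l - a) \<le> c"
    using al by (simp add: pos_divide_le_eq)
  then have "l * (y l / (l - a)) \<le> l * c"
    using al a by (intro mult_left_mono) auto
  also have "l * (y l / (l - a)) = (2 * p + 1) * y l"
    using ratio by (metis times_divide_eq_left times_divide_eq_right mult.commute)
  finally have "(p + 1) * y l \<le> 0"
    using lc by (simp add: algebra_simps)
  then have "y l \<le> 0"
    using p by (simp add: mult_le_0_iff)
  moreover have "0 \<le> y l"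
    unfolding y_def using young_weight_nonneg[OF W_plus_young_weight[OF Y]] by (simp add: real_of_ereal_pos)
  ultimately have "y l = 0"
    by linarith
  then show ?thesis
    by (simp only: y_def l_def)
qed

lemma W_plus_pos:
  assumes Y: "Y \<in> W_plus p" and p: "1 \<le> p" and b: "0 < b"
  shows "0 < real_of_ereal (Y b)"
proof (rule ccontr)
  define y where "y u = real_of_ereal (Y u)" for u
  have Y_eq: "Y u = ereal (y u)" for u
    unfolding y_def by (rule W_plus_real[OF Y])
  define s where "s = 1 + 1 / (2 * p)"
  have s: "1 < s" using p by (simp add: s_def)
  assume "\<not> ?thesis"
  then have "y b = 0"
    using young_weight_nonneg[OF W_plus_young_weight[OF Y], of b] by (simp add: Y_eq)
  then have zero: "y (b * s ^ n) = 0" for n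
  proof (induction n)
    case (Suc n)
    have "0 < b * s ^ n" using b s by simp
    from W_plus_zero_spreads[OF Y p this] Suc show ?case
      unfolding y_def s_def by (simp add: algebra_simps)
  qed simp
  obtain n where "1 / b < s ^ n"
    using real_arch_pow[OF s] by blast
  then have "1 \<le> b * s ^ n"
    using b by (simp add: field_simps)
  then have "Y 1 \<le> Y (b * s ^ n)"
    by (intro young_weight_mono_abs[OF W_plus_young_weight[OF Y]]) simp
  then have "y 1 \<le> 0"
    using zero[of n] by (simp add: Y_eq)
  moreover have "0 < y 1"
    unfolding y_def by (rule W_plus_one_pos[OF Y])
  ultimately show False
    by linarith
qed

lemma W_plus_strict_mono:
  assumes Y: "Y \<in> W_plus p" and p: "1 \<le> p" and ab: "0 \<le> a" "a < b"
  shows "real_of_ereal (Y a) < real_of_ereal (Y b)"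
proof -
  define t where "t = a / b"
  have t: "0 \<le> t" "t < 1" "a = t * b"
    using ab by (auto simp: t_def field_simps)
  have "Y a \<le> ereal t * Y b"
    using young_weight_scale_le[OF W_plus_young_weight[OF Y], of t b] t by simp
  then have "real_of_ereal (Y a) \<le> t * real_of_ereal (Y b)"
    by (subst (asm) (1 2) W_plus_real[OF Y]) simp
  also have "\<dots> < real_of_ereal (Y b)"
    using W_plus_pos[OF Y p] ab t by simp
  finally show ?thesis .
qed

lemma e2ennreal_approx:
  fixes y z :: ereal
  assumes "0 \<le> y" "0 \<le> z" "\<bar>z - y\<bar> < ereal e"
  shows "e2ennreal z \<le> e2ennreal y + ennreal e \<and> e2ennreal y \<le> e2ennreal z + ennreal e"
proof -
  obtain y' z' where "y = ereal y'" "z = ereal z'" "0 \<le> y'" "0 \<le> z'" "\<bar>z' - y'\<bar> < e"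
    using assms by (cases y; cases z) auto
  then show ?thesis
    by (simp add: abs_less_iff flip: ennreal_plus)
qed

lemma tendsto_ennreal_of_approx:
  fixes x :: "'b \<Rightarrow> ennreal"
  assumes fin: "a \<noteq> \<infinity>"
    and approx: "\<And>e. 0 < e \<Longrightarrow> \<forall>\<^sub>F k in F. x k \<le> a + ennreal e \<and> a \<le> x k + ennreal e"
  shows "(x \<longlongrightarrow> a) F"
proof -
  obtain a' where a: "a = ennreal a'" "0 \<le> a'"
    using fin by (cases a) auto
  have close: "\<forall>\<^sub>F k in F. x k = ennreal (enn2real (x k)) \<and> \<bar>enn2real (x k) - a'\<bar> \<le> e"
    if "0 < e" for e
    using approx[OF that]
  proof eventually_elim
    case (elim k)
    then obtain r where "x k = ennreal r" "0 \<le> r"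
      using a by (cases "x k") (auto simp: top_unique)
    with elim a that show ?case
      by (auto simp flip: ennreal_plus)
  qed
  have "((\<lambda>k. enn2real (x k)) \<longlongrightarrow> a') F"
  proof (rule tendstoI)
    fix e :: real
    assume "0 < e"
    then have "0 < e / 2" by simp
    from close[OF this] show "\<forall>\<^sub>F k in F. dist (enn2real (x k)) a' < e"
      by eventually_elim (use \<open>0 < e\<close> in \<open>auto simp: dist_real_def\<close>)
  qed
  then have "((\<lambda>k. ennreal (enn2real (x k))) \<longlongrightarrow> a) F"
    using a by (simp add: tendsto_ennrealI)
  then show ?thesis
    by (rule Lim_transform_eventually) (use close[of 1] in \<open>auto elim: eventually_mono\<close>)
qed

lemma eventually_less_of_tendsto:
  fixes u v :: "'b \<Rightarrow> 'c::{linorder_topology,dense_linorder}"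
  assumes u: "(u \<longlongrightarrow> a) F" and v: "(v \<longlongrightarrow> b) F" and "a < b"
  shows "\<forall>\<^sub>F k in F. u k < v k"
proof -
  obtain c where "a < c" "c < b"
    using dense[OF \<open>a < b\<close>] by blast
  then have "\<forall>\<^sub>F k in F. u k < c" "\<forall>\<^sub>F k in F. c < v k"
    using order_tendstoD(2)[OF u] order_tendstoD(1)[OF v] by auto
  then show ?thesis
    by eventually_elim (rule less_trans)
qed

lemma tendsto_Inf_sublevel:
  fixes \<phi>s :: "nat \<Rightarrow> real \<Rightarrow> 'b::{linorder_topology,dense_linorder}"
    and \<phi> :: "real \<Rightarrow> 'b" and cs :: "nat \<Rightarrow> 'b"
  assumes antimono: "\<And>k s r. 0 < s \<Longrightarrow> s \<le> r \<Longrightarrow> \<phi>s k r \<le> \<phi>s k s"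
    and lim: "\<And>r. 0 < r \<Longrightarrow> (\<lambda>k. \<phi>s k r) \<longlonglongrightarrow> \<phi> r"
    and lim_level: "cs \<longlonglongrightarrow> c"
    and leaves_level: "\<And>s r. 0 < s \<Longrightarrow> s < r \<Longrightarrow> \<phi> s \<le> c \<Longrightarrow> \<phi> r < c"
    and nonempty: "\<And>k. \<exists>r>0. \<phi>s k r \<le> cs k" "\<exists>r>0. \<phi> r \<le> c"
  shows "(\<lambda>k. Inf {r. 0 < r \<and> \<phi>s k r \<le> cs k}) \<longlonglongrightarrow> Inf {r. 0 < r \<and> \<phi> r \<le> c}"
proof -
  define S where "S = {r. 0 < r \<and> \<phi> r \<le> c}"
  define Ss where "Ss k = {r. 0 < r \<and> \<phi>s k r \<le> cs k}" for k
  have bdd: "bdd_below S" "bdd_below (Ss k)" for k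
    unfolding S_def Ss_def by (auto intro!: bdd_belowI[of _ 0])
  have ne: "S \<noteq> {}" "Ss k \<noteq> {}" for k
    using nonempty unfolding S_def Ss_def by auto
  show ?thesis
    unfolding S_def[symmetric] Ss_def[symmetric]
  proof (rule order_tendstoI)
    fix a
    assume a: "a < Inf S"
    show "\<forall>\<^sub>F k in sequentially. a < Inf (Ss k)"
    proof (cases "a < 0")
      case True
      have "0 \<le> Inf (Ss k)" for k
        using ne by (intro cInf_greatest) (auto simp: Ss_def)
      with True show ?thesis
        by (intro always_eventually allI) (rule less_le_trans)
    next
      case False
      define r where "r = (a + Inf S) / 2"
      have r: "0 < r" "a < r" "r < Inf S"
        using False a by (auto simp: r_def)
      have "c < \<phi> r"
        using cInf_lower[OF _ bdd(1), of r] r by (force simp: S_def)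
      with lim_level lim[OF r(1)] have "\<forall>\<^sub>F k in sequentially. cs k < \<phi>s k r"
        by (rule eventually_less_of_tendsto)
      then show ?thesis
      proof eventually_elim
        case (elim k)
        have "r < s" if "s \<in> Ss k" for s
          using that elim antimono[of s r k] by (force simp: Ss_def)
        then have "r \<le> Inf (Ss k)"
          by (intro cInf_greatest[OF ne(2)]) (auto intro: less_imp_le)
        with r show ?case by simp
      qed
    qed
  next
    fix a
    assume "Inf S < a"
    then obtain s where s: "s \<in> S" "s < a"
      using cInf_lessD[OF ne(1)] by blast
    define r where "r = (s + a) / 2"
    have r: "s < r" "r < a" "0 < r"
      using s by (auto simp: r_def S_def)
    have "\<phi> r < c"
      using leaves_level[of s r] r s by (auto simp: S_def)
    with lim[OF r(3)] lim_level have "\<forall>\<^sub>F k in sequentially. \<phi>s k r < cs k"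
      by (rule eventually_less_of_tendsto)
    then show "\<forall>\<^sub>F k in sequentially. Inf (Ss k) < a"
    proof eventually_elim
      case (elim k)
      then have "Inf (Ss k) \<le> r"
        using r by (intro cInf_lower[OF _ bdd(2)]) (auto simp: Ss_def)
      with r show ?case by simp
    qed
  qed
qed

lemma tendsto_young_weight_at:
  assumes uc: "unif_conv_compact Ys Y" and Ys: "\<And>k. normalized_young_weight (Ys k)"
    and Y: "normalized_young_weight Y" and fin: "Y x \<noteq> \<infinity>"
  shows "(\<lambda>k. e2ennreal (Ys k x)) \<longlonglongrightarrow> e2ennreal (Y x)"
proof (rule tendsto_ennreal_of_approx)
  show "e2ennreal (Y x) \<noteq> \<infinity>"
    using fin young_weight_nonneg[OF Y, of x] by (cases "Y x") auto
  fix e :: real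
  assume "0 < e"
  then have "\<forall>\<^sub>F k in sequentially. \<forall>u\<in>{x}. \<bar>Ys k u - Y u\<bar> < ereal e"
    by (rule uc[unfolded unif_conv_compact_def, rule_format, OF compact_sing])
  then show "\<forall>\<^sub>F k in sequentially. e2ennreal (Ys k x) \<le> e2ennreal (Y x) + ennreal e \<and>
      e2ennreal (Y x) \<le> e2ennreal (Ys k x) + ennreal e"
    by eventually_elim (simp add: e2ennreal_approx young_weight_nonneg[OF Y] young_weight_nonneg[OF Ys])
qed

definition orlicz_modular :: "(real \<Rightarrow> ereal) \<Rightarrow> 'a measure \<Rightarrow> ('a \<Rightarrow> real) \<Rightarrow> real \<Rightarrow> ennreal" where
  "orlicz_modular Z M f r = (\<integral>\<^sup>+ x. e2ennreal (Z (f x / r)) \<partial>M)"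

lemma orlicz_norm_eq_Inf_modular:
  "orlicz_norm Z M f = Inf {r. 0 < r \<and> orlicz_modular Z M f r \<le> e2ennreal (Z 1)}"
  unfolding orlicz_norm_def orlicz_modular_def ..

lemma orlicz_modular_antimono:
  assumes Z: "normalized_young_weight Z" and "0 < s" "s \<le> r"
  shows "orlicz_modular Z M f r \<le> orlicz_modular Z M f s"
  unfolding orlicz_modular_def
proof (rule nn_integral_mono)
  fix x
  have "\<bar>f x / r\<bar> \<le> \<bar>f x / s\<bar>"
    using assms by (simp add: abs_div frac_le)
  then show "e2ennreal (Z (f x / r)) \<le> e2ennreal (Z (f x / s))"
    by (intro e2ennreal_mono young_weight_mono_abs[OF Z])
qed

locale bounded_prob_function = prob_space M for M :: "'a measure" +
  fixes f :: "'a \<Rightarrow> real" and B :: real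
  assumes f_measurable [measurable]: "f \<in> borel_measurable M"
    and B_pos: "0 < B"
    and f_bounded: "\<And>x. x \<in> space M \<Longrightarrow> \<bar>f x\<bar> \<le> B"
begin

lemma young_weight_comp_measurable:
  assumes "normalized_young_weight Z"
  shows "(\<lambda>x. e2ennreal (Z (f x / r))) \<in> borel_measurable M"
  using young_weight_borel_measurable[OF assms] by measurable

lemma scaled_in_cball:
  assumes "0 < r" "x \<in> space M"
  shows "f x / r \<in> cball 0 (B / r)"
  using f_bounded[OF assms(2)] assms(1) by (simp add: abs_div divide_right_mono)

lemma orlicz_modular_le:
  assumes Z: "normalized_young_weight Z" and r: "0 < r"
  shows "orlicz_modular Z M f r \<le> e2ennreal (Z (B / r))"
proof -
  have "orlicz_modular Z M f r \<le> (\<integral>\<^sup>+ x. e2ennreal (Z (B / r)) \<partial>M)"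
    unfolding orlicz_modular_def
  proof (rule nn_integral_mono)
    fix x
    assume "x \<in> space M"
    then have "\<bar>f x / r\<bar> \<le> \<bar>B / r\<bar>"
      using scaled_in_cball[OF r] B_pos r by simp
    then show "e2ennreal (Z (f x / r)) \<le> e2ennreal (Z (B / r))"
      by (intro e2ennreal_mono young_weight_mono_abs[OF Z])
  qed
  then show ?thesis by (simp add: emeasure_space_1)
qed

lemma B_in_sublevel:
  assumes "normalized_young_weight Z"
  shows "orlicz_modular Z M f B \<le> e2ennreal (Z 1)"
  using orlicz_modular_le[OF assms B_pos] B_pos by simp

lemma in_orlicz_bounded:
  assumes Z: "normalized_young_weight Z"
  shows "in_orlicz Z M f"
proof -
  have "(\<integral>\<^sup>+ x. e2ennreal (Z ((1 / B) * f x)) \<partial>M) = orlicz_modular Z M f B"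
    unfolding orlicz_modular_def by simp
  also have "\<dots> < \<infinity>"
    using B_in_sublevel[OF Z] young_weight_one_finite[OF Z] young_weight_nonneg[OF Z, of 1]
    by (cases "Z 1") (auto intro: le_less_trans[OF _ ennreal_less_top])
  finally show ?thesis
    unfolding in_orlicz_def using B_pos by (intro conjI f_measurable exI[of _ "1 / B"]) auto
qed

lemma orlicz_modular_finite:
  assumes Y: "Y \<in> W_plus p" and r: "0 < r"
  shows "orlicz_modular Y M f r \<noteq> \<infinity>"
  using orlicz_modular_le[OF W_plus_young_weight[OF Y] r] W_plus_e2ennreal[OF Y]
  by (auto simp: top_unique)

lemma orlicz_modular_tendsto:
  assumes Y: "Y \<in> W_plus p" and Ys: "\<And>k. normalized_young_weight (Ys k)"
    and uc: "unif_conv_compact Ys Y" and r: "0 < r"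
  shows "(\<lambda>k. orlicz_modular (Ys k) M f r) \<longlonglongrightarrow> orlicz_modular Y M f r"
proof (rule tendsto_ennreal_of_approx[OF orlicz_modular_finite[OF Y r]])
  fix e :: real
  assume "0 < e"
  have close: "\<forall>\<^sub>F k in sequentially. \<forall>x\<in>space M.
      e2ennreal (Ys k (f x / r)) \<le> e2ennreal (Y (f x / r)) + ennreal e \<and>
      e2ennreal (Y (f x / r)) \<le> e2ennreal (Ys k (f x / r)) + ennreal e"
    using uc[unfolded unif_conv_compact_def, rule_format, OF compact_cball \<open>0 < e\<close>, of 0 "B / r"]
  proof eventually_elim
    case (elim k)
    then show ?case
      using scaled_in_cball[OF r] young_weight_nonneg[OF Ys] young_weight_nonneg[OF W_plus_young_weight[OF Y]]
      by (simp add: e2ennreal_approx)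
  qed
  have integral_plus: "(\<integral>\<^sup>+ x. e2ennreal (Z (f x / r)) + ennreal e \<partial>M) = orlicz_modular Z M f r + ennreal e"
    if "normalized_young_weight Z" for Z
    unfolding orlicz_modular_def using young_weight_comp_measurable[OF that]
    by (simp add: nn_integral_add emeasure_space_1)
  show "\<forall>\<^sub>F k in sequentially. orlicz_modular (Ys k) M f r \<le> orlicz_modular Y M f r + ennreal e \<and>
      orlicz_modular Y M f r \<le> orlicz_modular (Ys k) M f r + ennreal e"
    using close
  proof eventually_elim
    case (elim k)
    show ?case
      unfolding integral_plus[OF Ys, symmetric] integral_plus[OF W_plus_young_weight[OF Y], symmetric]
      unfolding orlicz_modular_def using elim by (auto intro: nn_integral_mono)
  qed
qed

lemma orlicz_modular_strict_antimono:
  assumes Y: "Y \<in> W_plus p" and p: "1 \<le> p" and sr: "0 < s" "s < r"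
    and nonzero: "\<not> (AE x in M. f x = 0)"
  shows "orlicz_modular Y M f r < orlicz_modular Y M f s"
proof -
  have Z: "normalized_young_weight Y"
    using W_plus_young_weight[OF Y] .
  have strict: "e2ennreal (Y (f x / r)) < e2ennreal (Y (f x / s))" if "f x \<noteq> 0" for x
  proof -
    have "\<bar>f x / r\<bar> < \<bar>f x / s\<bar>"
      using sr that by (simp add: abs_div divide_strict_left_mono)
    then have "real_of_ereal (Y \<bar>f x / r\<bar>) < real_of_ereal (Y \<bar>f x / s\<bar>)"
      by (rule W_plus_strict_mono[OF Y p abs_ge_zero])
    then have "real_of_ereal (Y (f x / r)) < real_of_ereal (Y (f x / s))"
      by (simp only: young_weight_abs[OF Z])
    then show ?thesis
      using real_of_ereal_pos[OF young_weight_nonneg[OF Z]] by (simp add: W_plus_e2ennreal[OF Y] ennreal_less_iff)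
  qed
  show ?thesis
    unfolding orlicz_modular_def
  proof (rule nn_integral_less)
    show "(\<integral>\<^sup>+ x. e2ennreal (Y (f x / r)) \<partial>M) \<noteq> \<infinity>"
      using orlicz_modular_finite[OF Y] sr unfolding orlicz_modular_def by simp
    show "AE x in M. e2ennreal (Y (f x / r)) \<le> e2ennreal (Y (f x / s))"
      using orlicz_modular_antimono[OF Z, of s r M] sr strict
      by (intro AE_I2) (metis less_imp_le order_refl div_0 young_weight_abs[OF Z])
    show "\<not> (AE x in M. e2ennreal (Y (f x / s)) \<le> e2ennreal (Y (f x / r)))"
    proof
      assume "AE x in M. e2ennreal (Y (f x / s)) \<le> e2ennreal (Y (f x / r))"
      then have "AE x in M. f x = 0"
        by eventually_elim (metis strict leD)
      with nonzero show False ..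
    qed
  qed (use young_weight_comp_measurable[OF Z] in auto)
qed

lemma orlicz_modular_leaves_level:
  assumes Y: "Y \<in> W_plus p" and p: "1 \<le> p" and sr: "0 < s" "s < r"
    and level: "orlicz_modular Y M f s \<le> e2ennreal (Y 1)"
  shows "orlicz_modular Y M f r < e2ennreal (Y 1)"
proof (cases "AE x in M. f x = 0")
  case True
  have "Y 0 = 0"
    using W_plus_young_weight[OF Y] unfolding normalized_young_weight_def by blast
  with True have "orlicz_modular Y M f r = (\<integral>\<^sup>+ x. 0 \<partial>M)"
    unfolding orlicz_modular_def by (intro nn_integral_cong_AE) (auto elim: eventually_mono)
  then show ?thesis
    using W_plus_one_pos[OF Y] by (simp add: W_plus_e2ennreal[OF Y])
next
  case False
  with orlicz_modular_strict_antimono[OF Y p sr] level show ?thesis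
    by (meson less_le_trans)
qed

end

theorem proposition1p6:
  fixes M :: "'a measure" and p :: real and Y :: "real \<Rightarrow> ereal"
    and Ys :: "nat \<Rightarrow> real \<Rightarrow> ereal" and f :: "'a \<Rightarrow> real"
  assumes "emeasure M (space M) = 1"
    and "p \<ge> 1"
    and "Y \<in> W_plus p"
    and "\<And>k. normalized_young_weight (Ys k)"
    and "unif_conv_compact Ys Y"
    and "f \<in> borel_measurable M"
    and "\<exists>B. \<forall>x\<in>space M. \<bar>f x\<bar> \<le> B"
  shows "in_orlicz Y M f \<and> (\<forall>k. in_orlicz (Ys k) M f) \<and>
         (\<lambda>k. orlicz_norm (Ys k) M f) \<longlonglongrightarrow> orlicz_norm Y M f"
proof -
  obtain B where B: "\<forall>x\<in>space M. \<bar>f x\<bar> \<le> B"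
    using assms(7) by blast
  interpret prob_space M
    using assms(1) by (rule prob_spaceI)
  interpret bounded_prob_function M f "\<bar>B\<bar> + 1"
    by unfold_locales (use assms(6) B in auto)
  have Y: "normalized_young_weight Y"
    using W_plus_young_weight[OF assms(3)] .
  have "(\<lambda>k. orlicz_norm (Ys k) M f) \<longlonglongrightarrow> orlicz_norm Y M f"
    unfolding orlicz_norm_eq_Inf_modular
  proof (rule tendsto_Inf_sublevel)
    show "orlicz_modular (Ys k) M f r \<le> orlicz_modular (Ys k) M f s" if "0 < s" "s \<le> r" for k s r
      using orlicz_modular_antimono[OF assms(4) that] .
    show "(\<lambda>k. orlicz_modular (Ys k) M f r) \<longlonglongrightarrow> orlicz_modular Y M f r" if "0 < r" for r
      using orlicz_modular_tendsto[OF assms(3,4,5) that] .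
    show "(\<lambda>k. e2ennreal (Ys k 1)) \<longlonglongrightarrow> e2ennreal (Y 1)"
      using tendsto_young_weight_at[OF assms(5,4) Y young_weight_one_finite[OF Y]] .
    show "orlicz_modular Y M f r < e2ennreal (Y 1)"
      if "0 < s" "s < r" "orlicz_modular Y M f s \<le> e2ennreal (Y 1)" for s r
      using orlicz_modular_leaves_level[OF assms(3,2) that] .
    show "\<exists>r>0. orlicz_modular (Ys k) M f r \<le> e2ennreal (Ys k 1)" for k
      using B_in_sublevel[OF assms(4)] B_pos by blast
    show "\<exists>r>0. orlicz_modular Y M f r \<le> e2ennreal (Y 1)"
      using B_in_sublevel[OF Y] B_pos by blast
  qed
  then show ?thesis
    using in_orlicz_bounded Y assms(4) by blast
qed

end
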